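(* Let $L\ge2$, let $\mathcal{L}$ and $\mathcal{U}$ be label sets of size $L$, and fix a distinguished $z\in\mathcal{L}$. Let $H$ be a Pauli Hamiltonian whose terms are operators $P_{u,\ell}$ ($u\in\mathcal{U},\ell\in\mathcal{L}$) and $Q_\ell$ ($\ell\in\mathcal{L}\setminus\{z\}$) such that all $P_{u,\ell}$ mutually commute and $Q_\ell$ commutes with $P_{u,\ell'}$ if and only if $\ell'=\ell$. Let $\mathcal{G}$ be the grouping with groups $\{P_{u,\ell}:u\in\mathcal{U}\}\cup\{Q_\ell\}$ for $\ell\neq z$ and $\{P_{u,z}:u\in\mathcal{U}\}$, and let $\mathcal{G}'$ be the grouping with groups $\{P_{u,\ell}:u\in\mathcal{U},\ell\in\mathcal{L}\}$ and $\{Q_\ell\}$ for $\ell\ne z$. Then there exists an overlapped grouping $\mathcal{R}$ with $L$ groups which is a repacking of $\mathcal{G}$ and also (after a suitable reindexing of the groups of $\mathcal{G}'$) a repacking of $\mathcal{G}'$.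
   Context: A grouping of a Pauli Hamiltonian is a list of pairwise disjoint sets of mutually commuting Pauli terms covering all terms; an overlapped grouping drops disjointness. A repacking of a grouping $(G^{[1]},\dots,G^{[m]})$ is an overlapped grouping $(G'^{[1]},\dots,G'^{[m]})$ with the same number of groups and $G^{[j]}\subseteq G'^{[j]}$ for every $j$. *)

theory Defs
  imports Main
begin

text \<open>Single-qubit Pauli operators (phases are irrelevant for commutation).\<close>
datatype pauli = PI | PX | PY | PZ

definition pauli_anticomm :: "pauli \<Rightarrow> pauli \<Rightarrow> bool" where
  "pauli_anticomm a b \<longleftrightarrow> a \<noteq> PI \<and> b \<noteq> PI \<and> a \<noteq> b"

type_synonym pstring = "pauli list"

definition commute :: "pstring \<Rightarrow> pstring \<Rightarrow> bool" where
  "commute p q \<longleftrightarrow> even (card {i. i < length p \<and> pauli_anticomm (p ! i) (q ! i)})"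

definition overlapped_grouping :: "pstring set \<Rightarrow> 'i set \<Rightarrow> ('i \<Rightarrow> pstring set) \<Rightarrow> bool" where
  "overlapped_grouping H I G \<longleftrightarrow>
     (\<forall>j\<in>I. G j \<subseteq> H \<and> (\<forall>p\<in>G j. \<forall>q\<in>G j. commute p q)) \<and> (\<Union>j\<in>I. G j) = H"

definition grouping :: "pstring set \<Rightarrow> 'i set \<Rightarrow> ('i \<Rightarrow> pstring set) \<Rightarrow> bool" where
  "grouping H I G \<longleftrightarrow> overlapped_grouping H I G \<and>
     (\<forall>j\<in>I. \<forall>k\<in>I. j \<noteq> k \<longrightarrow> G j \<inter> G k = {})"

text \<open>R is a repacking of the grouping G (same index set, hence same number of groups).\<close>
definition repacking :: "pstring set \<Rightarrow> 'i set \<Rightarrow> ('i \<Rightarrow> pstring set) \<Rightarrow> ('i \<Rightarrow> pstring set) \<Rightarrow> bool" where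
  "repacking H I G R \<longleftrightarrow> grouping H I G \<and> overlapped_grouping H I R \<and> (\<forall>j\<in>I. G j \<subseteq> R j)"

end

(* Keep the groups of G for the labels l \<noteq> z and enlarge the group of z to all P terms,
   which commute pairwise. With \<sigma> = id this contains G' as well, since G'_z consists of
   the P terms and G'_l = {Q_l} \<subseteq> G_l. That G and G' are groupings at all rests on
   Q_l \<noteq> P_{u,l'}: Q_l anticommutes with P_{u,l''} for any label l'' \<noteq> l (one exists as
   L \<ge> 2), while P_{u,l'} commutes with every P term. *)
theory Submission
  imports Defs
begin

lemma commute_refl: "commute p p"
  by (simp add: commute_def pauli_anticomm_def)

lemma commute_sym:
  assumes "length p = length q" and "commute p q"
  shows "commute q p"
proof -
  have "{i. i < length q \<and> pauli_anticomm (q ! i) (p ! i)} =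
        {i. i < length p \<and> pauli_anticomm (p ! i) (q ! i)}"
    using assms(1) unfolding pauli_anticomm_def by auto
  then show ?thesis using assms(2) unfolding commute_def by simp
qed

lemma repacking_cong:
  assumes "\<And>j. j \<in> I \<Longrightarrow> G j = G2 j"
  shows "repacking H I G R \<longleftrightarrow> repacking H I G2 R"
  using assms unfolding repacking_def grouping_def overlapped_grouping_def by auto

lemma groupingI:
  assumes "\<And>j. j \<in> I \<Longrightarrow> G j \<subseteq> H"
    and "\<And>j p q. j \<in> I \<Longrightarrow> p \<in> G j \<Longrightarrow> q \<in> G j \<Longrightarrow> commute p q"
    and "H \<subseteq> (\<Union>j\<in>I. G j)"
    and "\<And>j k. j \<in> I \<Longrightarrow> k \<in> I \<Longrightarrow> j \<noteq> k \<Longrightarrow> G j \<inter> G k = {}"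
  shows "grouping H I G"
  using assms unfolding grouping_def overlapped_grouping_def by blast

lemma repackingI:
  assumes "grouping H I G"
    and "\<And>j. j \<in> I \<Longrightarrow> G j \<subseteq> R j"
    and "\<And>j. j \<in> I \<Longrightarrow> R j \<subseteq> H"
    and "\<And>j p q. j \<in> I \<Longrightarrow> p \<in> R j \<Longrightarrow> q \<in> R j \<Longrightarrow> commute p q"
  shows "repacking H I G R"
proof -
  have "H = (\<Union>j\<in>I. G j)"
    using assms(1) unfolding grouping_def overlapped_grouping_def by simp
  also have "\<dots> \<subseteq> (\<Union>j\<in>I. R j)" using assms(2) by blast
  finally have "(\<Union>j\<in>I. R j) = H" using assms(3) by blast
  then show ?thesis
    using assms unfolding repacking_def overlapped_grouping_def by blast
qed

locale label_blocks =
  fixes LL :: "'l set" and UU :: "'u set" and z :: 'l and n :: nat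
    and P :: "'u \<Rightarrow> 'l \<Rightarrow> pstring" and Q :: "'l \<Rightarrow> pstring"
  assumes z_in_LL: "z \<in> LL"
    and two_labels: "card LL \<ge> 2"
    and length_P: "\<And>u l. u \<in> UU \<Longrightarrow> l \<in> LL \<Longrightarrow> length (P u l) = n"
    and length_Q: "\<And>l. l \<in> LL - {z} \<Longrightarrow> length (Q l) = n"
    and inj_P: "inj_on (\<lambda>(u, l). P u l) (UU \<times> LL)"
    and inj_Q: "inj_on Q (LL - {z})"
    and P_commute_P: "\<And>u l u' l'. u \<in> UU \<Longrightarrow> l \<in> LL \<Longrightarrow> u' \<in> UU \<Longrightarrow> l' \<in> LL \<Longrightarrow>
                        commute (P u l) (P u' l')"
    and Q_commute_P_iff: "\<And>l u l'. l \<in> LL - {z} \<Longrightarrow> u \<in> UU \<Longrightarrow> l' \<in> LL \<Longrightarrow>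
                        commute (Q l) (P u l') \<longleftrightarrow> l' = l"
begin

definition P_terms :: "pstring set" where
  "P_terms = {P u l | u l. u \<in> UU \<and> l \<in> LL}"

definition terms :: "pstring set" where
  "terms = P_terms \<union> Q ` (LL - {z})"

definition label_group :: "'l \<Rightarrow> pstring set" where
  "label_group l = (if l = z then {P u z | u. u \<in> UU} else {P u l | u. u \<in> UU} \<union> {Q l})"

definition type_group :: "'l \<Rightarrow> pstring set" where
  "type_group l = (if l = z then P_terms else {Q l})"

definition merged_group :: "'l \<Rightarrow> pstring set" where
  "merged_group l = (if l = z then P_terms else label_group l)"

lemma P_eq_P_iff:
  "u \<in> UU \<Longrightarrow> l \<in> LL \<Longrightarrow> u' \<in> UU \<Longrightarrow> l' \<in> LL \<Longrightarrow> P u l = P u' l' \<longleftrightarrow> u = u' \<and> l = l'"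
  using inj_P unfolding inj_on_def by auto

lemma Q_eq_Q_iff: "l \<in> LL - {z} \<Longrightarrow> l' \<in> LL - {z} \<Longrightarrow> Q l = Q l' \<longleftrightarrow> l = l'"
  using inj_Q unfolding inj_on_def by auto

lemma Q_neq_P:
  assumes "l \<in> LL - {z}" and "u \<in> UU" and "l' \<in> LL"
  shows "Q l \<noteq> P u l'"
proof
  assume eq: "Q l = P u l'"
  obtain l'' where l'': "l'' \<in> LL" "l'' \<noteq> l"
  proof -
    have "\<not> LL \<subseteq> {l}"
      using two_labels card_mono[of "{l}" LL] by auto
    then show ?thesis using that by blast
  qed
  have "commute (Q l) (P u l'')"
    unfolding eq using P_commute_P assms l'' by blast
  then show False using Q_commute_P_iff assms l'' by blast
qed

lemma Q_notin_P_terms: "l \<in> LL - {z} \<Longrightarrow> Q l \<notin> P_terms"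
  unfolding P_terms_def using Q_neq_P by blast

lemma P_commute_Q: "l \<in> LL - {z} \<Longrightarrow> u \<in> UU \<Longrightarrow> commute (P u l) (Q l)"
  using commute_sym Q_commute_P_iff length_P length_Q by simp

lemma P_terms_commute: "p \<in> P_terms \<Longrightarrow> q \<in> P_terms \<Longrightarrow> commute p q"
  unfolding P_terms_def using P_commute_P by blast

lemma mem_label_group:
  "x \<in> label_group l \<longleftrightarrow> (\<exists>u\<in>UU. x = P u l) \<or> (l \<noteq> z \<and> x = Q l)"
  unfolding label_group_def by auto

lemma label_group_commute:
  assumes "l \<in> LL" and "p \<in> label_group l" and "q \<in> label_group l"
  shows "commute p q"
  using assms P_commute_P P_commute_Q Q_commute_P_iff commute_refl
  unfolding mem_label_group by auto

lemma label_group_subset_terms: "l \<in> LL \<Longrightarrow> label_group l \<subseteq> terms"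
  unfolding terms_def P_terms_def label_group_def by auto

lemma label_group_disjoint:
  assumes "l \<in> LL" and "l' \<in> LL" and "l \<noteq> l'"
  shows "label_group l \<inter> label_group l' = {}"
proof -
  have False if "x \<in> label_group l" and "x \<in> label_group l'" for x
    using that[unfolded mem_label_group]
  proof (elim disjE conjE bexE)
    fix u u' assume "x = P u l" "x = P u' l'" "u \<in> UU" "u' \<in> UU"
    then show False using P_eq_P_iff assms by blast
  next
    fix u assume "x = P u l" "u \<in> UU" "l' \<noteq> z" "x = Q l'"
    then show False using Q_neq_P assms by auto
  next
    fix u assume "x = P u l'" "u \<in> UU" "l \<noteq> z" "x = Q l"
    then show False using Q_neq_P assms by auto
  next
    assume "l \<noteq> z" "x = Q l" "l' \<noteq> z" "x = Q l'"
    then show False using Q_eq_Q_iff assms by auto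
  qed
  then show ?thesis by blast
qed

lemma grouping_label_group: "grouping terms LL label_group"
proof (rule groupingI)
  show "terms \<subseteq> (\<Union>l\<in>LL. label_group l)"
  proof
    fix x assume "x \<in> terms"
    then consider u l where "u \<in> UU" "l \<in> LL" "x = P u l" | l where "l \<in> LL - {z}" "x = Q l"
      unfolding terms_def P_terms_def by blast
    then show "x \<in> (\<Union>l\<in>LL. label_group l)"
      by cases (auto simp: mem_label_group)
  qed
qed (use label_group_subset_terms label_group_commute label_group_disjoint in auto)

lemma grouping_type_group: "grouping terms LL type_group"
proof (rule groupingI)
  show "terms \<subseteq> (\<Union>l\<in>LL. type_group l)"
    using z_in_LL unfolding terms_def type_group_def by force
  show "type_group l \<inter> type_group l' = {}" if "l \<in> LL" "l' \<in> LL" "l \<noteq> l'" for l l'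
    using that Q_notin_P_terms Q_eq_Q_iff unfolding type_group_def by auto
qed (use P_terms_commute commute_refl in \<open>auto simp: type_group_def terms_def split: if_splits\<close>)

lemma merged_group_subset_terms: "l \<in> LL \<Longrightarrow> merged_group l \<subseteq> terms"
  using label_group_subset_terms unfolding merged_group_def terms_def by auto

lemma merged_group_commute: "l \<in> LL \<Longrightarrow> p \<in> merged_group l \<Longrightarrow> q \<in> merged_group l \<Longrightarrow> commute p q"
  using P_terms_commute label_group_commute unfolding merged_group_def by (auto split: if_splits)

lemma repacking_label_group: "repacking terms LL label_group merged_group"
proof (rule repackingI[OF grouping_label_group])
  show "label_group l \<subseteq> merged_group l" if "l \<in> LL" for l
    using that unfolding merged_group_def label_group_def P_terms_def by auto
qed (use merged_group_subset_terms merged_group_commute in auto)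

lemma repacking_type_group: "repacking terms LL type_group merged_group"
proof (rule repackingI[OF grouping_type_group])
  show "type_group l \<subseteq> merged_group l" if "l \<in> LL" for l
    unfolding type_group_def merged_group_def label_group_def by auto
qed (use merged_group_subset_terms merged_group_commute in auto)

end

theorem lemma3:
  fixes L n :: nat
    and LL :: "'l set" and UU :: "'u set" and z :: 'l
    and P :: "'u \<Rightarrow> 'l \<Rightarrow> pstring" and Q :: "'l \<Rightarrow> pstring"
    and H :: "pstring set" and G G' :: "'l \<Rightarrow> pstring set"
  assumes "L \<ge> 2"
    and "finite LL" and "card LL = L" and "finite UU" and "card UU = L"
    and "z \<in> LL"
    and len_P: "\<forall>u\<in>UU. \<forall>l\<in>LL. length (P u l) = n"
    and len_Q: "\<forall>l\<in>LL - {z}. length (Q l) = n"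
    and inj_P: "inj_on (\<lambda>(u, l). P u l) (UU \<times> LL)"
    and inj_Q: "inj_on Q (LL - {z})"
    and PP: "\<forall>u\<in>UU. \<forall>l\<in>LL. \<forall>u'\<in>UU. \<forall>l'\<in>LL. commute (P u l) (P u' l')"
    and QP: "\<forall>l\<in>LL - {z}. \<forall>u\<in>UU. \<forall>l'\<in>LL. commute (Q l) (P u l') \<longleftrightarrow> l' = l"
    and H_def: "H = {P u l | u l. u \<in> UU \<and> l \<in> LL} \<union> Q ` (LL - {z})"
    and G_def: "\<forall>l\<in>LL. G l = (if l = z then {P u z | u. u \<in> UU}
                                   else {P u l | u. u \<in> UU} \<union> {Q l})"
    and G'_def: "\<forall>l\<in>LL. G' l = (if l = z then {P u l' | u l'. u \<in> UU \<and> l' \<in> LL}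
                                     else {Q l})"
  shows "\<exists>R. repacking H LL G R \<and>
             (\<exists>\<sigma>. bij_betw \<sigma> LL LL \<and> repacking H LL (G' \<circ> \<sigma>) R)"
proof -
  interpret label_blocks LL UU z n P Q
    using assms by unfold_locales auto
  have "H = terms"
    unfolding H_def terms_def P_terms_def ..
  moreover have "repacking terms LL G merged_group"
    using repacking_label_group repacking_cong[of LL G label_group]
    unfolding label_group_def by (simp add: G_def)
  moreover have "repacking terms LL (G' \<circ> id) merged_group"
    using repacking_type_group repacking_cong[of LL "G' \<circ> id" type_group]
    unfolding type_group_def P_terms_def by (simp add: G'_def)
  ultimately show ?thesis by blast
qed

end
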